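(* Let $N\ge2$ and let $F$ be any marginal distribution as in the context. Define, for $r\in(0,1]$, $$L(r)=\int_{[0,r]}\frac{x^{\frac N{N-1}}}{r^{\frac1{N-1}}}\,dF(x)+r(1-F(r)),$$ and let $r^*$ be a maximizer of $L$ over $(0,1]$. Then the revenue guarantee of the second price auction with random reserve distributed according to $G_{r^*}(x)=(x/r^* )^{\frac1{N-1}}$, $x\in[0,r^*]$, is strictly greater than the revenue guarantee of the posted price mechanism, which equals $\max_{x\in[0,1]}x(1-F(x))$. That is, this auction robustly dominates the posted price mechanism.
   Context: A single indivisible good is sold to $N$ bidders with private values $v_i\in[0,1]$, each with the same marginal cdf $F$ whose support is $[0,1]$ (point masses allowed). $\Pi(F)$ is the set of probability measures on $[0,1]^N$ with all one-dimensional marginals equal to $F$. For a mechanism $(q,t)$ (allocation $q:[0,1]^N\to[0,1]^N$ with $\sum_iq_i\le1$, payments $t:[0,1]^N\to\mathbb{R}^N$) used with truthful bidding, its revenue guarantee is $\inf_{\pi\in\Pi(F)}\int\sum_it_i\,d\pi$. The second price auction with random reserve distributed as a cdf $G$: a reserve $\rho\sim G$ is drawn independently; a highest bidder (ties broken uniformly at random) wins if her bid is at least $\rho$ and pays $\max(\rho,\text{second highest bid})$; equivalently, a unique highest bidder with value $v_{(1)}$ receives the good with probability $G(v_{(1)})$ and pays $v_{(1)}G(v_{(1)})-\int_{v_{(2)}}^{v_{(1)}}G(s)\,ds$. The posted price mechanism posts a price and sells to a bidder willing to pay it; its revenue guarantee (the monopoly profit against the maximally positively correlated structure) is $\max_{x\in[0,1]}x(1-F(x))$.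 A mechanism $M_1$ robustly dominates $M_2$ if the revenue guarantee of $M_1$ is strictly greater than that of $M_2$ for every marginal distribution. *)

theory Defs
  imports "HOL-Probability.Probability"
begin

text \<open>A marginal distribution F on [0,1] (point masses allowed), represented by its
  probability measure mu on the reals; F = cdf mu. Support equals [0,1].\<close>
definition is_marginal :: "real measure \<Rightarrow> bool" where
  "is_marginal \<mu> \<longleftrightarrow> prob_space \<mu> \<and> sets \<mu> = sets borel \<and> measure \<mu> {0..1} = 1 \<and>
     (\<forall>x\<in>{0..1}. \<forall>e>0. measure \<mu> {x - e<..<x + e} > 0)"

text \<open>Highest and second highest bid among bidders 0..N-1 (with multiplicity).\<close>
definition top1 :: "nat \<Rightarrow> (nat \<Rightarrow> real) \<Rightarrow> real" where
  "top1 N v = Max (v ` {..<N})"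

definition top2 :: "nat \<Rightarrow> (nat \<Rightarrow> real) \<Rightarrow> real" where
  "top2 N v = Max {min (v i) (v j) | i j. i < N \<and> j < N \<and> i \<noteq> j}"

definition joint_structures :: "nat \<Rightarrow> real measure \<Rightarrow> (nat \<Rightarrow> real) measure set" where
  "joint_structures N \<mu> = {\<pi>. prob_space \<pi> \<and> sets \<pi> = sets (PiM {..<N} (\<lambda>_. borel)) \<and>
       (\<forall>i<N. distr \<pi> borel (\<lambda>v. v i) = \<mu>)}"

text \<open>Revenue guarantee of a mechanism whose (truthful) total revenue at profile v is R v.\<close>
definition revenue_guarantee ::
  "nat \<Rightarrow> real measure \<Rightarrow> ((nat \<Rightarrow> real) \<Rightarrow> real) \<Rightarrow> real" where
  "revenue_guarantee N \<mu> R = (INF \<pi> \<in> joint_structures N \<mu>. integral\<^sup>L \<pi> R)"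

text \<open>Total revenue of the second price auction with random reserve distributed as cdf G.\<close>
definition spa_reserve_revenue :: "(real \<Rightarrow> real) \<Rightarrow> nat \<Rightarrow> (nat \<Rightarrow> real) \<Rightarrow> real" where
  "spa_reserve_revenue G N v =
     top1 N v * G (top1 N v) - integral {top2 N v..top1 N v} G"

definition reserve_cdf :: "nat \<Rightarrow> real \<Rightarrow> real \<Rightarrow> real" where
  "reserve_cdf N r x =
     (if x \<le> 0 then 0 else if r \<le> x then 1 else (x / r) powr (1 / real (N - 1)))"

definition L_fun :: "nat \<Rightarrow> real measure \<Rightarrow> real \<Rightarrow> real" where
  "L_fun N \<mu> r =
     set_lebesgue_integral \<mu> {0..r}
        (\<lambda>x. x powr (real N / real (N - 1)) / r powr (1 / real (N - 1)))
     + r * (1 - cdf \<mu> r)"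

definition posted_price_guarantee :: "real measure \<Rightarrow> real" where
  "posted_price_guarantee \<mu> = (SUP x \<in> {0..1}. x * (1 - cdf \<mu> x))"

end

theory Submission
  imports Defs
begin

text \<open>
  Write phi(x) = min(x,r)^(N/(N-1)) / r^(1/(N-1)) for x >= 0, so that L(r) is the integral of
  phi against F, and Phi = (N-1)/N * phi + max(x - r, 0), an antiderivative of G_r. Then
  x G_r(x) - Phi(x) = phi(x)/N, so the revenue at a bid profile is phi(v1)/N + Phi(v2) with
  v1 >= v2 the two highest bids. Since Phi >= (N-1)/N * phi, phi is monotone and every bid
  other than the highest is at most v2, the revenue dominates (1/N) * sum_i phi(v_i)
  pointwise; the expectation of the latter under any joint structure with marginal F is L(r).
  On the other hand L(x) - x(1 - F(x)) is the integral of phi over [0,x], which full support of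
  F bounds below by a positive constant uniformly in x >= a > 0, while prices below a earn less
  than a. Hence sup x(1 - F(x)) < L(r*).
\<close>

definition distinct_pairs :: "nat \<Rightarrow> (nat \<times> nat) set" where
  "distinct_pairs N = {(i, j). i < N \<and> j < N \<and> i \<noteq> j}"

lemma finite_distinct_pairs: "finite (distinct_pairs N)"
  unfolding distinct_pairs_def by (rule finite_subset[of _ "{..<N} \<times> {..<N}"]) auto

lemma top2_eq_Max_distinct_pairs:
  "top2 N v = Max ((\<lambda>(i, j). min (v i) (v j)) ` distinct_pairs N)"
  unfolding top2_def distinct_pairs_def by (rule arg_cong[where f = Max]) force

lemma top1_attained: "0 < N \<Longrightarrow> \<exists>i<N. v i = top1 N v"
  unfolding top1_def using Max_in[of "v ` {..<N}"] by fastforce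

lemma top1_ge: "i < N \<Longrightarrow> v i \<le> top1 N v"
  unfolding top1_def by (intro Max_ge) auto

lemma top2_attained:
  assumes "2 \<le> N"
  shows "\<exists>i j. i < N \<and> j < N \<and> i \<noteq> j \<and> top2 N v = min (v i) (v j)"
proof -
  have "(0, 1) \<in> distinct_pairs N"
    using assms unfolding distinct_pairs_def by simp
  then have "top2 N v \<in> (\<lambda>(i, j). min (v i) (v j)) ` distinct_pairs N"
    unfolding top2_eq_Max_distinct_pairs using finite_distinct_pairs by (intro Max_in) auto
  then show ?thesis
    unfolding distinct_pairs_def by auto
qed

lemma top2_ge: "i < N \<Longrightarrow> j < N \<Longrightarrow> i \<noteq> j \<Longrightarrow> min (v i) (v j) \<le> top2 N v"
  unfolding top2_eq_Max_distinct_pairs using finite_distinct_pairs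
  by (intro Max_ge) (auto simp: distinct_pairs_def intro!: image_eqI[of _ _ "(i, j)"])

lemma top2_le_top1: "2 \<le> N \<Longrightarrow> top2 N v \<le> top1 N v"
  using top2_attained[of N v] top1_ge[of _ N v] by force

lemma le_top2_if_not_top1:
  assumes "i0 < N" "v i0 = top1 N v" "i < N" "i \<noteq> i0"
  shows "v i \<le> top2 N v"
  using top2_ge[of i N i0 v] top1_ge[of i N v] assms by linarith

lemma borel_measurable_top1: "top1 N \<in> borel_measurable (PiM {..<N} (\<lambda>_. borel))"
  unfolding top1_def[abs_def] by (rule borel_measurable_Max) auto

lemma borel_measurable_top2: "top2 N \<in> borel_measurable (PiM {..<N} (\<lambda>_. borel))"
  unfolding top2_eq_Max_distinct_pairs[abs_def]
  by (rule borel_measurable_Max[OF finite_distinct_pairs])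
    (auto simp: distinct_pairs_def split: prod.splits)

definition revenue_share :: "nat \<Rightarrow> real \<Rightarrow> real \<Rightarrow> real" where
  "revenue_share N r x =
     (min (max x 0) r) powr (real N / real (N - 1)) / r powr (1 / real (N - 1))"

definition reserve_cdf_integral :: "nat \<Rightarrow> real \<Rightarrow> real \<Rightarrow> real" where
  "reserve_cdf_integral N r x = real (N - 1) / real N * revenue_share N r x + max (x - r) 0"

context
  fixes N :: nat and r :: real
  assumes N2: "2 \<le> N" and r_pos: "0 < r"
begin

private abbreviation "k \<equiv> 1 / real (N - 1)"
private abbreviation "p \<equiv> real N / real (N - 1)"

private lemma exponent_pos: "0 < k"
  using N2 by simp

private lemma exponent_eq: "p = 1 + k"
  using N2 by (simp add: of_nat_diff field_simps)

private lemma powr_exponent_eq: "0 < x \<Longrightarrow> x powr p = x * x powr k"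
  by (subst exponent_eq) (simp add: powr_add)

lemma revenue_share_eq_powr:
  "0 \<le> x \<Longrightarrow> x \<le> r \<Longrightarrow> revenue_share N r x = x powr p / r powr k"
  unfolding revenue_share_def by simp

lemma revenue_share_above: "r \<le> x \<Longrightarrow> revenue_share N r x = r"
  unfolding revenue_share_def using r_pos powr_exponent_eq[of r] by simp

lemma revenue_share_nonpos: "x \<le> 0 \<Longrightarrow> revenue_share N r x = 0"
  unfolding revenue_share_def using r_pos by simp

lemma revenue_share_mono: "x \<le> y \<Longrightarrow> revenue_share N r x \<le> revenue_share N r y"
  unfolding revenue_share_def using r_pos
  by (intro divide_right_mono powr_mono2) auto

lemma revenue_share_nonneg: "0 \<le> revenue_share N r x"
  unfolding revenue_share_def by simp

lemma revenue_share_le: "revenue_share N r x \<le> r"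
  using revenue_share_mono[of x r] revenue_share_above[of x] revenue_share_above[of r]
  by (cases "x \<le> r") auto

lemma borel_measurable_revenue_share: "revenue_share N r \<in> borel_measurable borel"
  unfolding revenue_share_def[abs_def] by measurable

lemma borel_measurable_reserve_cdf_integral: "reserve_cdf_integral N r \<in> borel_measurable borel"
  unfolding reserve_cdf_integral_def[abs_def] using borel_measurable_revenue_share by measurable

lemma continuous_on_revenue_share: "continuous_on UNIV (revenue_share N r)"
  unfolding revenue_share_def[abs_def] using exponent_pos r_pos
  by (intro continuous_intros continuous_on_powr') (auto simp: divide_pos_pos)

lemma continuous_on_reserve_cdf_integral: "continuous_on A (reserve_cdf_integral N r)"
  unfolding reserve_cdf_integral_def[abs_def]
  by (intro continuous_intros continuous_on_subset[OF continuous_on_revenue_share]) auto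

lemma reserve_cdf_integral_derivative:
  assumes "x \<noteq> 0" "x \<noteq> r"
  shows "(reserve_cdf_integral N r has_real_derivative reserve_cdf N r x) (at x)"
proof -
  consider "x < 0" | "0 < x" "x < r" | "r < x"
    using assms by linarith
  then show ?thesis
  proof cases
    case 1
    have "((\<lambda>_. 0) has_real_derivative 0) (at x)"
      by (rule DERIV_const)
    then show ?thesis
      using 1 r_pos
      by (rule_tac has_field_derivative_transform_within_open[where S = "{..<0}"])
        (auto simp: reserve_cdf_def reserve_cdf_integral_def revenue_share_nonpos)
  next
    case 2
    have "((\<lambda>y. real (N - 1) / real N * (y powr p / r powr k)) has_real_derivative
        real (N - 1) / real N * (p * x powr (p - 1) / r powr k)) (at x)"
      using 2 by (intro DERIV_cmult DERIV_cdivide has_real_derivative_powr) auto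
    moreover have "real (N - 1) / real N * (p * x powr (p - 1) / r powr k) = reserve_cdf N r x"
      using 2 N2 r_pos
      by (simp only: exponent_eq add_diff_cancel_left') (simp add: reserve_cdf_def powr_divide field_simps)
    ultimately show ?thesis
      using 2
      by (rule_tac has_field_derivative_transform_within_open[where S = "{0<..<r}"])
        (auto simp: reserve_cdf_integral_def revenue_share_eq_powr)
  next
    case 3
    have "((\<lambda>y. real (N - 1) / real N * r + (y - r)) has_real_derivative 1) (at x)"
      by (auto intro!: derivative_eq_intros)
    then show ?thesis
      using 3 r_pos
      by (rule_tac has_field_derivative_transform_within_open[where S = "{r<..}"])
        (auto simp: reserve_cdf_def reserve_cdf_integral_def revenue_share_above)
  qed
qed

lemma reserve_cdf_has_integral:
  assumes "a \<le> b"
  shows "(reserve_cdf N r has_integral reserve_cdf_integral N r b - reserve_cdf_integral N r a) {a..b}"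
  using assms reserve_cdf_integral_derivative continuous_on_reserve_cdf_integral
  by (intro fundamental_theorem_of_calculus_interior_strong[where S = "{0, r}"])
    (auto simp: has_real_derivative_iff_has_vector_derivative)

lemma mult_reserve_cdf_minus_integral:
  "x * reserve_cdf N r x - reserve_cdf_integral N r x = revenue_share N r x / real N"
proof -
  consider "x \<le> 0" | "0 < x" "x < r" | "r \<le> x" by linarith
  then show ?thesis
  proof cases
    case 1
    then show ?thesis
      using r_pos by (simp add: reserve_cdf_def reserve_cdf_integral_def revenue_share_nonpos)
  next
    case 2
    then have "x * reserve_cdf N r x = revenue_share N r x"
      using r_pos powr_exponent_eq[of x]
      by (simp add: reserve_cdf_def revenue_share_eq_powr powr_divide)
    then show ?thesis
      using 2 N2 by (simp add: reserve_cdf_integral_def of_nat_diff field_simps)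
  next
    case 3
    then show ?thesis
      using r_pos N2 by (simp add: reserve_cdf_def reserve_cdf_integral_def revenue_share_above
          of_nat_diff field_simps)
  qed
qed

lemma spa_reserve_revenue_eq:
  "spa_reserve_revenue (reserve_cdf N r) N v =
     revenue_share N r (top1 N v) / real N + reserve_cdf_integral N r (top2 N v)"
proof -
  have "integral {top2 N v..top1 N v} (reserve_cdf N r) =
      reserve_cdf_integral N r (top1 N v) - reserve_cdf_integral N r (top2 N v)"
    by (rule integral_unique[OF reserve_cdf_has_integral[OF top2_le_top1[OF N2]]])
  then show ?thesis
    using mult_reserve_cdf_minus_integral[of "top1 N v"] by (simp add: spa_reserve_revenue_def)
qed

lemma borel_measurable_spa_reserve_revenue:
  "spa_reserve_revenue (reserve_cdf N r) N \<in> borel_measurable (PiM {..<N} (\<lambda>_. borel))"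
  unfolding spa_reserve_revenue_eq[abs_def]
  using borel_measurable_top1 borel_measurable_top2 borel_measurable_revenue_share
    borel_measurable_reserve_cdf_integral
  by measurable

lemma mean_revenue_share_le_spa_reserve_revenue:
  "(\<Sum>i<N. revenue_share N r (v i)) / real N \<le> spa_reserve_revenue (reserve_cdf N r) N v"
proof -
  obtain i0 where i0: "i0 < N" "v i0 = top1 N v"
    using top1_attained[of N v] N2 by auto
  have others: "revenue_share N r (v i) \<le> revenue_share N r (top2 N v)"
    if "i \<in> {..<N} - {i0}" for i
    using that i0 by (intro revenue_share_mono le_top2_if_not_top1) auto
  have "(\<Sum>i<N. revenue_share N r (v i)) =
      revenue_share N r (top1 N v) + (\<Sum>i\<in>{..<N} - {i0}. revenue_share N r (v i))"
    using i0 by (simp add: sum.remove)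
  also have "\<dots> \<le> revenue_share N r (top1 N v) +
      real (card ({..<N} - {i0})) * revenue_share N r (top2 N v)"
    using others by (intro add_left_mono sum_bounded_above)
  also have "card ({..<N} - {i0}) = N - 1"
    using i0 by simp
  also have "real (N - 1) * revenue_share N r (top2 N v)
      \<le> real N * reserve_cdf_integral N r (top2 N v)"
    using N2 by (simp add: reserve_cdf_integral_def distrib_left)
  also have "revenue_share N r (top1 N v) + real N * reserve_cdf_integral N r (top2 N v) =
      real N * spa_reserve_revenue (reserve_cdf N r) N v"
    using N2 by (simp add: spa_reserve_revenue_eq field_simps)
  finally show ?thesis
    using N2 by (simp add: divide_le_eq mult.commute)
qed

lemma abs_spa_reserve_revenue_le:
  assumes "\<forall>i<N. v i \<le> 1"
  shows "\<bar>spa_reserve_revenue (reserve_cdf N r) N v\<bar> \<le> r + 1"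
proof -
  have "0 \<le> (\<Sum>i<N. revenue_share N r (v i)) / real N"
    using revenue_share_nonneg by (simp add: sum_nonneg)
  then have "0 \<le> spa_reserve_revenue (reserve_cdf N r) N v"
    using mean_revenue_share_le_spa_reserve_revenue[of v] by linarith
  moreover have "top2 N v \<le> 1"
    using top1_attained[of N v] top2_le_top1[OF N2, of v] assms N2 by auto
  moreover have "revenue_share N r (top1 N v) / real N +
      real (N - 1) / real N * revenue_share N r (top2 N v) \<le> r"
  proof -
    have "revenue_share N r (top1 N v) + real (N - 1) * revenue_share N r (top2 N v)
        \<le> r + real (N - 1) * r"
      using revenue_share_le by (intro add_mono mult_left_mono) auto
    then show ?thesis
      using N2 by (simp add: of_nat_diff field_simps)
  qed
  ultimately show ?thesis
    using r_pos by (simp add: spa_reserve_revenue_eq reserve_cdf_integral_def)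
qed

end

lemma real_distribution_if_is_marginal: "is_marginal \<mu> \<Longrightarrow> real_distribution \<mu>"
  unfolding is_marginal_def real_distribution_def real_distribution_axioms_def by simp

lemma AE_is_marginal_unit_interval:
  assumes "is_marginal \<mu>"
  shows "AE x in \<mu>. x \<in> {0..1}"
  using assms unfolding is_marginal_def by (intro prob_space.AE_prob_1) auto

lemma is_marginal_measure_window_pos:
  assumes "is_marginal \<mu>" "0 < b" "b \<le> 1"
  shows "0 < measure \<mu> {b/2<..<b}"
  using assms unfolding is_marginal_def
  by (auto dest!: bspec[of _ _ "3 * b / 4"] spec[of _ "b / 4"] simp: field_simps)

lemma (in real_distribution) measure_greaterThan_eq: "measure M {x<..} = 1 - cdf M x"
  using prob_compl[of "{..x}"] by (simp add: cdf_def Compl_eq_Diff_UNIV[symmetric] Compl_atMost)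

lemma (in real_distribution) integral_revenue_share:
  assumes "2 \<le> N" "0 < r" and nonneg: "AE x in M. 0 \<le> x"
  shows "integral\<^sup>L M (revenue_share N r) = L_fun N M r"
proof -
  define f where "f x = x powr (real N / real (N - 1)) / r powr (1 / real (N - 1))" for x
  have f_eq: "f x = revenue_share N r x" if "x \<in> {0..r}" for x
    using that unfolding f_def by (intro revenue_share_eq_powr[OF assms(1,2), symmetric]) auto
  have ae: "AE x in M. revenue_share N r x = indicator {0..r} x * f x + r * indicator {r<..} x"
    using nonneg by eventually_elim
      (auto simp: indicator_def f_eq revenue_share_above[OF assms(1,2)])
  have integrable_f: "integrable M (\<lambda>x. indicator {0..r} x * f x)"
  proof (rule integrable_const_bound[where B = r])
    show "AE x in M. norm (indicator {0..r} x * f x) \<le> r"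
      using revenue_share_le[OF assms(1,2)] revenue_share_nonneg[OF assms(1,2)] assms(2)
      by (intro AE_I2) (auto simp: indicator_def f_eq)
  qed (simp add: f_def)
  have "integral\<^sup>L M (revenue_share N r) =
      integral\<^sup>L M (\<lambda>x. indicator {0..r} x * f x + r * indicator {r<..} x)"
    using borel_measurable_revenue_share[OF assms(1,2)]
    by (intro integral_cong_AE[OF _ _ ae]) (auto simp: f_def)
  also have "\<dots> = integral\<^sup>L M (\<lambda>x. indicator {0..r} x * f x) + r * measure M {r<..}"
    using emeasure_finite[of "{r<..}"]
    by (subst Bochner_Integration.integral_add[OF integrable_f])
      (auto intro!: integrable_real_indicator simp: less_top[symmetric])
  finally show ?thesis
    by (simp add: L_fun_def set_lebesgue_integral_def f_def measure_greaterThan_eq)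
qed

lemma (in real_distribution) joint_structures_nonempty: "joint_structures N M \<noteq> {}"
proof -
  define diagonal where "diagonal x = (\<lambda>i\<in>{..<N}. x)" for x :: real
  have diagonal_measurable: "diagonal \<in> measurable M (PiM {..<N} (\<lambda>_. borel))"
    unfolding diagonal_def by measurable
  have "distr M (PiM {..<N} (\<lambda>_. borel)) diagonal \<in> joint_structures N M"
    unfolding joint_structures_def
  proof (intro CollectI conjI allI impI)
    show "prob_space (distr M (PiM {..<N} (\<lambda>_. borel)) diagonal)"
      using diagonal_measurable by (rule prob_space_distr)
    fix i assume "i < N"
    then have "distr M borel ((\<lambda>v. v i) \<circ> diagonal) = distr M M (\<lambda>x. x)"
      by (intro distr_cong) (auto simp: diagonal_def)
    then show "distr (distr M (PiM {..<N} (\<lambda>_. borel)) diagonal) borel (\<lambda>v. v i) = M"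
      using \<open>i < N\<close> diagonal_measurable by (simp add: distr_distr distr_id)
  qed simp
  then show ?thesis
    by blast
qed

lemma
  assumes "\<pi> \<in> joint_structures N \<mu>" "i < N"
  shows borel_measurable_joint_structure_component: "(\<lambda>v. v i) \<in> borel_measurable \<pi>"
    and distr_joint_structure_component: "distr \<pi> borel (\<lambda>v. v i) = \<mu>"
  using assms measurable_component_singleton[of i "{..<N}" "\<lambda>_. borel"]
  unfolding joint_structures_def by (auto cong: measurable_cong_sets)

lemma integral_joint_structure_component:
  fixes f :: "real \<Rightarrow> real"
  assumes "\<pi> \<in> joint_structures N \<mu>" "i < N" "f \<in> borel_measurable borel"
  shows "integral\<^sup>L \<pi> (\<lambda>v. f (v i)) = integral\<^sup>L \<mu> f"
  using integral_distr[OF borel_measurable_joint_structure_component[OF assms(1,2)] assms(3)]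
    distr_joint_structure_component[OF assms(1,2)]
  by simp

lemma AE_joint_structure_unit_cube:
  assumes "is_marginal \<mu>" "\<pi> \<in> joint_structures N \<mu>"
  shows "AE v in \<pi>. \<forall>i<N. v i \<in> {0..1}"
proof -
  have "AE v in \<pi>. v i \<in> {0..1}" if "i < N" for i
    using AE_is_marginal_unit_interval[OF assms(1)]
    unfolding distr_joint_structure_component[OF assms(2) that, symmetric]
    by (rule AE_distrD[OF borel_measurable_joint_structure_component[OF assms(2) that]])
  then have "AE v in \<pi>. \<forall>i\<in>{..<N}. v i \<in> {0..1}"
    by (intro AE_finite_allI) auto
  then show ?thesis
    by (rule eventually_mono) auto
qed

lemma L_fun_le_integral_spa_reserve_revenue:
  assumes N2: "2 \<le> N" and r_pos: "0 < r" and marginal: "is_marginal \<mu>"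
    and joint: "\<pi> \<in> joint_structures N \<mu>"
  shows "L_fun N \<mu> r \<le> integral\<^sup>L \<pi> (spa_reserve_revenue (reserve_cdf N r) N)"
proof -
  interpret \<pi>: prob_space \<pi>
    using joint unfolding joint_structures_def by simp
  interpret \<mu>: real_distribution \<mu>
    using marginal by (rule real_distribution_if_is_marginal)
  have sets_\<pi>: "sets \<pi> = sets (PiM {..<N} (\<lambda>_. borel))"
    using joint unfolding joint_structures_def by simp
  have share_integrable: "integrable \<pi> (\<lambda>v. revenue_share N r (v i))" if "i < N" for i
    using revenue_share_le[OF N2 r_pos] revenue_share_nonneg[OF N2 r_pos]
      measurable_compose[OF borel_measurable_joint_structure_component[OF joint that]
        borel_measurable_revenue_share[OF N2 r_pos]]
    by (intro \<pi>.integrable_const_bound[where B = r]) auto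
  have revenue_integrable: "integrable \<pi> (spa_reserve_revenue (reserve_cdf N r) N)"
  proof (rule \<pi>.integrable_const_bound[where B = "r + 1"])
    show "AE v in \<pi>. norm (spa_reserve_revenue (reserve_cdf N r) N v) \<le> r + 1"
      using AE_joint_structure_unit_cube[OF marginal joint]
      by eventually_elim (simp add: abs_spa_reserve_revenue_le[OF N2 r_pos])
    show "spa_reserve_revenue (reserve_cdf N r) N \<in> borel_measurable \<pi>"
      using borel_measurable_spa_reserve_revenue[OF N2 r_pos]
      by (simp cong: measurable_cong_sets[OF sets_\<pi>])
  qed
  have "L_fun N \<mu> r = integral\<^sup>L \<mu> (revenue_share N r)"
    using AE_is_marginal_unit_interval[OF marginal]
    by (intro \<mu>.integral_revenue_share[symmetric] N2 r_pos) (auto elim: eventually_mono)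
  also have "\<dots> = (\<Sum>i<N. integral\<^sup>L \<pi> (\<lambda>v. revenue_share N r (v i))) / real N"
    using N2 by (simp add: integral_joint_structure_component[OF joint]
        borel_measurable_revenue_share[OF N2 r_pos])
  also have "\<dots> = integral\<^sup>L \<pi> (\<lambda>v. (\<Sum>i<N. revenue_share N r (v i)) / real N)"
    using share_integrable by (simp add: integral_sum)
  also have "\<dots> \<le> integral\<^sup>L \<pi> (spa_reserve_revenue (reserve_cdf N r) N)"
    using share_integrable revenue_integrable mean_revenue_share_le_spa_reserve_revenue[OF N2 r_pos]
    by (intro integral_mono integrable_divide integrable_sum) auto
  finally show ?thesis .
qed

lemma L_fun_le_revenue_guarantee:
  assumes "2 \<le> N" "0 < r" "is_marginal \<mu>"
  shows "L_fun N \<mu> r \<le> revenue_guarantee N \<mu> (spa_reserve_revenue (reserve_cdf N r) N)"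
  unfolding revenue_guarantee_def
  using real_distribution.joint_structures_nonempty[OF real_distribution_if_is_marginal[OF assms(3)]]
    L_fun_le_integral_spa_reserve_revenue[OF assms]
  by (intro cINF_greatest) auto

lemma revenue_share_ge_window:
  assumes N2: "2 \<le> N" and a: "0 < a" "a \<le> x" "x \<le> 1"
  shows "(a/2) powr (real N / real (N - 1)) * indicator {a/2<..<a} y + x * indicator {x<..} y
    \<le> revenue_share N x y"
proof -
  consider "x < y" | "y \<in> {a/2<..<a}" | "y \<notin> {a/2<..<a}" "y \<le> x"
    by fastforce
  then show ?thesis
  proof cases
    case 1
    then show ?thesis
      using a revenue_share_above[OF N2, of x y] by (auto simp: indicator_def)
  next
    case 2
    have "(a/2) powr (real N / real (N - 1)) \<le> y powr (real N / real (N - 1))"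
      using 2 a by (intro powr_mono2) auto
    also have "\<dots> \<le> y powr (real N / real (N - 1)) / x powr (1 / real (N - 1))"
      using a by (simp add: le_divide_eq mult_left_le powr_le1)
    also have "\<dots> = revenue_share N x y"
      using 2 a by (intro revenue_share_eq_powr[OF N2, symmetric]) auto
    finally show ?thesis
      using 2 a by (auto simp: indicator_def)
  next
    case 3
    then show ?thesis
      using a revenue_share_nonneg[OF N2, of x y] by (auto simp: indicator_def)
  qed
qed

lemma window_plus_posted_price_revenue_le_L_fun:
  assumes N2: "2 \<le> N" and marginal: "is_marginal \<mu>" and a: "0 < a" "a \<le> x" "x \<le> 1"
  shows "(a/2) powr (real N / real (N - 1)) * measure \<mu> {a/2<..<a} + x * (1 - cdf \<mu> x)
    \<le> L_fun N \<mu> x"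
proof -
  interpret real_distribution \<mu>
    using marginal by (rule real_distribution_if_is_marginal)
  define c where "c = (a/2) powr (real N / real (N - 1))"
  have x_pos: "0 < x"
    using a by simp
  have integrable_indicator: "integrable \<mu> (indicator A :: real \<Rightarrow> real)" if "A \<in> sets borel" for A
    using that emeasure_finite[of A] by (intro integrable_real_indicator) (auto simp: less_top[symmetric])
  have "integral\<^sup>L \<mu> (\<lambda>y. c * indicator {a/2<..<a} y + x * indicator {x<..} y)
      \<le> integral\<^sup>L \<mu> (revenue_share N x)"
  proof (rule integral_mono_AE)
    show "integrable \<mu> (revenue_share N x)"
      using revenue_share_le[OF N2 x_pos] revenue_share_nonneg[OF N2 x_pos]
        borel_measurable_revenue_share[OF N2 x_pos]
      by (intro integrable_const_bound[where B = x]) auto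
    show "AE y in \<mu>. c * indicator {a/2<..<a} y + x * indicator {x<..} y \<le> revenue_share N x y"
      unfolding c_def using revenue_share_ge_window[OF N2 a] by simp
  qed (use integrable_indicator in auto)
  moreover have "integral\<^sup>L \<mu> (revenue_share N x) = L_fun N \<mu> x"
    using AE_is_marginal_unit_interval[OF marginal]
    by (intro integral_revenue_share N2 x_pos) (auto elim: eventually_mono)
  ultimately show ?thesis
    using integrable_indicator by (simp add: c_def measure_greaterThan_eq)
qed

lemma posted_price_guarantee_less_L_fun_max:
  assumes N2: "2 \<le> N" and marginal: "is_marginal \<mu>"
    and max: "\<forall>x\<in>{0<..1}. L_fun N \<mu> x \<le> L_fun N \<mu> rstar"
  shows "posted_price_guarantee \<mu> < L_fun N \<mu> rstar"
proof -
  interpret real_distribution \<mu>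
    using marginal by (rule real_distribution_if_is_marginal)
  define window where "window a = (a/2) powr (real N / real (N - 1)) * measure \<mu> {a/2<..<a}" for a
  have window_pos: "0 < window a" if "0 < a" "a \<le> 1" for a
    unfolding window_def using is_marginal_measure_window_pos[OF marginal that] that by simp
  have "window 1 \<le> L_fun N \<mu> 1"
    using window_plus_posted_price_revenue_le_L_fun[OF N2 marginal, of 1 1] cdf_bounded_prob[of 1]
    unfolding window_def by simp
  then have "0 < L_fun N \<mu> rstar"
    using window_pos[of 1] max[rule_format, of 1] by simp
  define a where "a = min 1 (L_fun N \<mu> rstar / 2)"
  have a: "0 < a" "a \<le> 1" "a < L_fun N \<mu> rstar"
    using \<open>0 < L_fun N \<mu> rstar\<close> unfolding a_def by auto
  have "x * (1 - cdf \<mu> x) \<le> max a (L_fun N \<mu> rstar - window a)" if "x \<in> {0..1}" for x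
  proof (cases "x < a")
    case True
    have "x * (1 - cdf \<mu> x) \<le> x"
      using that cdf_nonneg[of x] by (simp add: mult_left_le)
    then show ?thesis
      using True by simp
  next
    case False
    then have "window a + x * (1 - cdf \<mu> x) \<le> L_fun N \<mu> x"
      using window_plus_posted_price_revenue_le_L_fun[OF N2 marginal a(1), of x] that
      unfolding window_def by simp
    moreover have "L_fun N \<mu> x \<le> L_fun N \<mu> rstar"
      using max False a(1) that by auto
    ultimately show ?thesis
      by simp
  qed
  then have "posted_price_guarantee \<mu> \<le> max a (L_fun N \<mu> rstar - window a)"
    unfolding posted_price_guarantee_def by (intro cSUP_least) auto
  also have "\<dots> < L_fun N \<mu> rstar"
    using a window_pos[OF a(1,2)] by simp
  finally show ?thesis .
qed

theorem theorem3:
  fixes N :: nat and \<mu> :: "real measure" and rstar :: real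
  assumes "N \<ge> 2"
    and "is_marginal \<mu>"
    and "rstar \<in> {0<..1}"
    and "\<forall>r\<in>{0<..1}. L_fun N \<mu> r \<le> L_fun N \<mu> rstar"
  shows "revenue_guarantee N \<mu> (spa_reserve_revenue (reserve_cdf N rstar) N)
           > posted_price_guarantee \<mu>"
proof -
  have "posted_price_guarantee \<mu> < L_fun N \<mu> rstar"
    using assms(1,2,4) by (rule posted_price_guarantee_less_L_fun_max)
  also have "\<dots> \<le> revenue_guarantee N \<mu> (spa_reserve_revenue (reserve_cdf N rstar) N)"
    using assms(1-3) by (intro L_fun_le_revenue_guarantee) auto
  finally show ?thesis .
qed

end
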